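(* Let $\tau\subset\overline{\mathrm{K\ddot ah}(X)}$ be a cone and $\beta=(0,\dots,0,-1/2,\dots,-1/2)$. Then the zero locus of $\mathrm{Ind}(\tau,\beta)$ in $\mathbb{C}^J$ consists of at most one point, namely $\alpha^0=(\alpha^0_{i,j})$ with $\alpha^0_{i,0}=-1/2$ for $1\le i\le r$ and $\alpha^0_{i,j}=0$ for $j\ge1$.
   Context: $N\cong\mathbb{Z}^n$, $M$ dual. $X$ smooth projective toric with fan $\Sigma$ and nef-partition $\Sigma(1)=I_1\sqcup\cdots\sqcup I_r$ (each $E_i=\sum_{\rho\in I_i}D_\rho$ nef), $I_i=\{\rho_{i,1},\dots,\rho_{i,n_i}\}$, $J=\{(i,j):1\le i\le r,0\le j\le n_i\}$, $\nu_{i,j}=(\rho_{i,j},e_i)$ ($j\ge1$), $\nu_{i,0}=(0,e_i)$ in $N\times\mathbb{Z}^r$. $L_{\mathrm{ext}}=\ker(\mathbb{Z}^J\to N\times\mathbb{Z}^r,\ e_{i,j}\mapsto\nu_{i,j})\cong H_2(X,\mathbb{Z})$, so $H^2(X,\mathbb{R})\cong L_{\mathrm{ext}}^\vee\otimes\mathbb{R}$ contains the closed Kähler cone $\overline{\mathrm{K\ddot ah}(X)}$. For $\ell\in L_{\mathrm{ext}}$, $\ell^+$ is its positive part and $I_\ell(\alpha)=\prod_{(i,j)\in J}\prod_{k=0}^{\ell^+_{i,j}-1}(\alpha_{i,j}-k)$. The indicial ideal $\mathrm{Ind}(\tau,\beta)\subset\mathbb{C}[\alpha_{i,j}:(i,j)\in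 J]$ is generated by $I_\ell(\alpha)$ for $0\ne\ell\in\tau^\vee\cap L_{\mathrm{ext}}$ and by $\sum_{(i,j)\in J}\langle\bar m,\nu_{i,j}\rangle\alpha_{i,j}-\langle\bar m,\beta\rangle$ for $\bar m\in M\times\mathbb{Z}^r$. *)

theory Defs
  imports "HOL-Analysis.Analysis"
begin

text \<open>The nef-partition is given by r, the sizes nI i = n_i and the
  ray generators rho (i,j) in N = Z^n (embedded in real^'n), for 1 <= i <= r, 1 <= j <= n_i.
  Index pairs (i,j) with j = 0 are the extra indices of J.\<close>

definition Jset :: "nat \<Rightarrow> (nat \<Rightarrow> nat) \<Rightarrow> (nat \<times> nat) set" where
  "Jset r nI = {(i,j). 1 \<le> i \<and> i \<le> r \<and> j \<le> nI i}"

definition J1 :: "nat \<Rightarrow> (nat \<Rightarrow> nat) \<Rightarrow> (nat \<times> nat) set" where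
  "J1 r nI = {(i,j). 1 \<le> i \<and> i \<le> r \<and> 1 \<le> j \<and> j \<le> nI i}"

definition int_vec :: "real^'n \<Rightarrow> bool" where
  "int_vec v \<longleftrightarrow> (\<forall>t. v $ t \<in> \<int>)"

definition gen_cone :: "('k \<Rightarrow> real^'n) \<Rightarrow> 'k set \<Rightarrow> (real^'n) set" where
  "gen_cone \<rho> S = {(\<Sum>k\<in>S. c k *\<^sub>R \<rho> k) | c. \<forall>k\<in>S. 0 \<le> c k}"

text \<open>A smooth complete fan with ray set {rho k | k in R}, given by its maximal cones
  (each maximal cone sigma in C is given by the set of indices of its rays).\<close>
definition smooth_complete_fan :: "('k \<Rightarrow> real^'n) \<Rightarrow> 'k set \<Rightarrow> 'k set set \<Rightarrow> bool" where
  "smooth_complete_fan \<rho> R C \<longleftrightarrow>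
     finite R \<and> finite C \<and> C \<noteq> {} \<and> inj_on \<rho> R \<and> (\<forall>k\<in>R. int_vec (\<rho> k)) \<and>
     (\<forall>\<sigma>\<in>C. \<sigma> \<subseteq> R \<and> card \<sigma> = CARD('n) \<and>
        (\<forall>v. int_vec v \<longrightarrow> (\<exists>c. (\<forall>k\<in>\<sigma>. c k \<in> \<int>) \<and> v = (\<Sum>k\<in>\<sigma>. c k *\<^sub>R \<rho> k)))) \<and>
     (\<forall>k\<in>R. \<exists>\<sigma>\<in>C. k \<in> \<sigma>) \<and>
     (\<forall>x. \<exists>\<sigma>\<in>C. x \<in> gen_cone \<rho> \<sigma>) \<and>
     (\<forall>\<sigma>\<in>C. \<forall>\<sigma>'\<in>C. gen_cone \<rho> \<sigma> \<inter> gen_cone \<rho> \<sigma>' = gen_cone \<rho> (\<sigma> \<inter> \<sigma>'))"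

text \<open>The R-divisor sum a_k D_k is nef / ample (convex / strictly convex support function).\<close>
definition nef_div :: "('k \<Rightarrow> real^'n) \<Rightarrow> 'k set \<Rightarrow> 'k set set \<Rightarrow> ('k \<Rightarrow> real) \<Rightarrow> bool" where
  "nef_div \<rho> R C a \<longleftrightarrow> (\<forall>\<sigma>\<in>C. \<exists>m::real^'n.
      (\<forall>k\<in>\<sigma>. m \<bullet> \<rho> k = - a k) \<and> (\<forall>k\<in>R. m \<bullet> \<rho> k \<ge> - a k))"

definition ample_div :: "('k \<Rightarrow> real^'n) \<Rightarrow> 'k set \<Rightarrow> 'k set set \<Rightarrow> ('k \<Rightarrow> real) \<Rightarrow> bool" where
  "ample_div \<rho> R C a \<longleftrightarrow> (\<forall>\<sigma>\<in>C. \<exists>m::real^'n.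
      (\<forall>k\<in>\<sigma>. m \<bullet> \<rho> k = - a k) \<and> (\<forall>k\<in>R - \<sigma>. m \<bullet> \<rho> k > - a k))"

definition projective_fan :: "('k \<Rightarrow> real^'n) \<Rightarrow> 'k set \<Rightarrow> 'k set set \<Rightarrow> bool" where
  "projective_fan \<rho> R C \<longleftrightarrow> (\<exists>a. ample_div \<rho> R C a)"

definition nef_partition :: "nat \<Rightarrow> (nat \<Rightarrow> nat) \<Rightarrow> (nat \<times> nat \<Rightarrow> real^'n) \<Rightarrow> (nat \<times> nat) set set \<Rightarrow> bool" where
  "nef_partition r nI \<rho> C \<longleftrightarrow>
     (\<forall>i\<in>{1..r}. nef_div \<rho> (J1 r nI) C (\<lambda>k. if fst k = i then 1 else 0))"

text \<open>H^2(X,R) = L_ext^dual tensor R = R^J / (M x Z^r)_R. A vector w in R^J represents the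
  class of the divisor sum_{(i,j), j>=1} (w(i,j) - w(i,0)) D_{rho_{i,j}}.
  The Kaehler cone (ample classes) as a set of representatives in R^J.\<close>
definition kahler_cone :: "nat \<Rightarrow> (nat \<Rightarrow> nat) \<Rightarrow> (nat \<times> nat \<Rightarrow> real^'n) \<Rightarrow> (nat \<times> nat) set set
    \<Rightarrow> (nat \<times> nat \<Rightarrow> real) set" where
  "kahler_cone r nI \<rho> C = {w. ample_div \<rho> (J1 r nI) C (\<lambda>k. w k - w (fst k, 0))}"

text \<open>L_ext = kernel of Z^J -> N x Z^r, e_{i,j} |-> nu_{i,j}.\<close>
definition Lext :: "nat \<Rightarrow> (nat \<Rightarrow> nat) \<Rightarrow> (nat \<times> nat \<Rightarrow> real^'n) \<Rightarrow> (nat \<times> nat \<Rightarrow> int) set" where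
  "Lext r nI \<rho> = {l. (\<forall>k. k \<notin> Jset r nI \<longrightarrow> l k = 0) \<and>
      (\<Sum>k\<in>J1 r nI. real_of_int (l k) *\<^sub>R \<rho> k) = 0 \<and>
      (\<forall>i\<in>{1..r}. (\<Sum>j\<in>{0..nI i}. l (i,j)) = 0)}"

definition dual_Lext :: "nat \<Rightarrow> (nat \<Rightarrow> nat) \<Rightarrow> (nat \<times> nat \<Rightarrow> real^'n) \<Rightarrow> (nat \<times> nat \<Rightarrow> real) set
    \<Rightarrow> (nat \<times> nat \<Rightarrow> int) set" where
  "dual_Lext r nI \<rho> \<tau> = {l \<in> Lext r nI \<rho>. \<forall>w\<in>\<tau>. (\<Sum>k\<in>Jset r nI. w k * real_of_int (l k)) \<ge> 0}"

definition I_ell :: "nat \<Rightarrow> (nat \<Rightarrow> nat) \<Rightarrow> (nat \<times> nat \<Rightarrow> int) \<Rightarrow> (nat \<times> nat \<Rightarrow> complex) \<Rightarrow> complex" where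
  "I_ell r nI l \<alpha> = (\<Prod>k\<in>Jset r nI. \<Prod>q<nat (l k). (\<alpha> k - of_nat q))"

definition pair_nu :: "(nat \<times> nat \<Rightarrow> real^'n) \<Rightarrow> real^'n \<Rightarrow> (nat \<Rightarrow> int) \<Rightarrow> nat \<times> nat \<Rightarrow> real" where
  "pair_nu \<rho> m kk ij = (if snd ij = 0 then real_of_int (kk (fst ij))
                        else m \<bullet> \<rho> ij + real_of_int (kk (fst ij)))"

text \<open>beta = (b0, b) in (N x Z^r) tensor C; pairing with (m,kk).\<close>
definition pair_beta :: "nat \<Rightarrow> real^'n \<Rightarrow> (nat \<Rightarrow> int) \<Rightarrow> complex^'n \<Rightarrow> (nat \<Rightarrow> complex) \<Rightarrow> complex" where
  "pair_beta r m kk b0 b = (\<Sum>t\<in>UNIV. complex_of_real (m $ t) * b0 $ t) +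
                           (\<Sum>i\<in>{1..r}. of_int (kk i) * b i)"

definition ind_zero_locus :: "nat \<Rightarrow> (nat \<Rightarrow> nat) \<Rightarrow> (nat \<times> nat \<Rightarrow> real^'n) \<Rightarrow> (nat \<times> nat \<Rightarrow> real) set
    \<Rightarrow> complex^'n \<Rightarrow> (nat \<Rightarrow> complex) \<Rightarrow> (nat \<times> nat \<Rightarrow> complex) set" where
  "ind_zero_locus r nI \<rho> \<tau> b0 b = {\<alpha>.
      (\<forall>l\<in>dual_Lext r nI \<rho> \<tau>. l \<noteq> (\<lambda>_. 0) \<longrightarrow> I_ell r nI l \<alpha> = 0) \<and>
      (\<forall>m kk. int_vec m \<longrightarrow>
         (\<Sum>k\<in>Jset r nI. complex_of_real (pair_nu \<rho> m kk k) * \<alpha> k) - pair_beta r m kk b0 b = 0)}"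

text \<open>Convex cone in R^J (functions on index pairs), stated pointwise since the
  function type carries no vector space instance.\<close>
definition fun_convex_cone :: "(nat \<times> nat \<Rightarrow> real) set \<Rightarrow> bool" where
  "fun_convex_cone S \<longleftrightarrow> S \<noteq> {} \<and>
     (\<forall>x\<in>S. \<forall>y\<in>S. (\<lambda>k. x k + y k) \<in> S) \<and> (\<forall>x\<in>S. \<forall>c\<ge>0. (\<lambda>k. c * x k) \<in> S)"

end

theory Submission
  imports Defs
begin

text \<open>The linear generators of Ind(\<tau>, \<beta>) say that \<open>\<Sum> \<alpha>(\<rho>) \<rho> = 0\<close> over the rays and
  that \<open>\<Sum>\<^sub>j \<alpha>(i,j) = -1/2\<close> for every \<open>i\<close>, so it suffices to show that \<open>\<alpha>\<close> vanishes on the rays.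
  If not, let \<open>F\<close> be the set of rays where \<open>\<alpha> \<noteq> 0\<close> and write \<open>\<Sum>\<^sub>F \<rho> = \<Sum>\<^sub>\<sigma> c(\<rho>) \<rho>\<close> in a
  maximal cone \<open>\<sigma>\<close>; by smoothness the \<open>c(\<rho>)\<close> are nonnegative integers. If \<open>F \<subseteq> \<sigma>\<close>, the
  independence of the rays of \<open>\<sigma>\<close> gives \<open>\<alpha> = 0\<close> on \<open>F\<close>. Otherwise \<open>1\<^sub>F - c\<close> is a relation
  among the rays that is nonnegative off \<open>\<sigma>\<close>. Such a relation pairs nonnegatively with every nef
  divisor (normalise its support function to vanish on \<open>\<sigma>\<close>), so its lift \<open>\<ell>\<close> to L_ext lies in
  the dual of \<open>\<tau>\<close>, and \<open>\<ell>(i,0) \<le> 0\<close> because each \<open>E\<^sub>i\<close> is nef. Hence the positive part of \<open>\<ell>\<close>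
  is the indicator of a nonempty subset of \<open>F\<close>, and \<open>I\<^sub>\<ell>(\<alpha>)\<close> is a product of nonzero values of
  \<open>\<alpha>\<close>, a contradiction.\<close>

lemma J1_Sigma: "J1 r nI = Sigma {1..r} (\<lambda>i. {1..nI i})"
  by (auto simp: J1_def)

lemma Jset_Sigma: "Jset r nI = Sigma {1..r} (\<lambda>i. {0..nI i})"
  by (auto simp: Jset_def)

lemma finite_J1: "finite (J1 r nI)"
  by (simp add: J1_Sigma)

lemma finite_Jset: "finite (Jset r nI)"
  by (simp add: Jset_Sigma)

lemma J1_subset_Jset: "J1 r nI \<subseteq> Jset r nI"
  by (auto simp: J1_def Jset_def)

lemma J1_iff: "k \<in> J1 r nI \<longleftrightarrow> k \<in> Jset r nI \<and> snd k \<noteq> 0"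
  by (cases k) (auto simp: J1_def Jset_def)

lemma sum_J1: "(\<Sum>k\<in>J1 r nI. f k) = (\<Sum>i\<in>{1..r}. \<Sum>j\<in>{1..nI i}. f (i,j))"
  by (simp add: J1_Sigma sum.Sigma)

lemma sum_Jset: "(\<Sum>k\<in>Jset r nI. f k) = (\<Sum>i\<in>{1..r}. \<Sum>j\<in>{0..nI i}. f (i,j))"
  by (simp add: Jset_Sigma sum.Sigma)

lemma int_vec_axis: "int_vec (axis t 1 :: real^'n)"
  by (auto simp: int_vec_def axis_def)

lemma smooth_complete_fanD:
  assumes "smooth_complete_fan \<rho> R C"
  shows "\<And>\<sigma>. \<sigma> \<in> C \<Longrightarrow> \<sigma> \<subseteq> R" and "\<And>k. k \<in> R \<Longrightarrow> int_vec (\<rho> k)"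
    and "\<And>x. \<exists>\<sigma>\<in>C. x \<in> gen_cone \<rho> \<sigma>"
  using assms unfolding smooth_complete_fan_def by blast+

lemma smooth_fan_cone_independent:
  fixes \<rho> :: "'k \<Rightarrow> real^'n"
  assumes F: "smooth_complete_fan \<rho> R C" and \<sigma>: "\<sigma> \<in> C"
  shows "inj_on \<rho> \<sigma>" and "independent (\<rho> ` \<sigma>)"
proof -
  have sR: "\<sigma> \<subseteq> R" and fR: "finite R" and inj: "inj_on \<rho> R" and cs: "card \<sigma> = CARD('n)"
    and gen: "\<And>v. int_vec v \<Longrightarrow> \<exists>c. v = (\<Sum>k\<in>\<sigma>. c k *\<^sub>R \<rho> k)"
    using F \<sigma> unfolding smooth_complete_fan_def by blast+
  show inj\<sigma>: "inj_on \<rho> \<sigma>" using inj sR by (rule inj_on_subset)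
  have "Basis \<subseteq> span (\<rho> ` \<sigma>)"
  proof
    fix b :: "real^'n" assume "b \<in> Basis"
    then obtain t where "b = axis t 1" by (auto simp: Basis_vec_def)
    then obtain c where "b = (\<Sum>k\<in>\<sigma>. c k *\<^sub>R \<rho> k)" using gen int_vec_axis by blast
    then show "b \<in> span (\<rho> ` \<sigma>)" by (simp add: span_sum span_scale span_base)
  qed
  then have "span (\<rho> ` \<sigma>) = UNIV"
    by (metis span_Basis span_minimal subspace_span top.extremum_unique)
  moreover have "card (\<rho> ` \<sigma>) = CARD('n)" using card_image[OF inj\<sigma>] cs by simp
  moreover have "finite \<sigma>" using sR fR finite_subset by blast
  ultimately show "independent (\<rho> ` \<sigma>)"
    using card_le_dim_spanning[of "\<rho> ` \<sigma>" UNIV] by simp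
qed

lemma smooth_fan_cone_coeffs_zero:
  fixes \<rho> :: "'k \<Rightarrow> real^'n"
  assumes F: "smooth_complete_fan \<rho> R C" and \<sigma>: "\<sigma> \<in> C"
    and e: "(\<Sum>k\<in>\<sigma>. e k *\<^sub>R \<rho> k) = 0" and k0: "k0 \<in> \<sigma>"
  shows "e k0 = 0"
proof -
  note inj = smooth_fan_cone_independent(1)[OF F \<sigma>]
  define c where "c v = e (inv_into \<sigma> \<rho> v)" for v
  have "(\<Sum>v\<in>\<rho> ` \<sigma>. c v *\<^sub>R v) = (\<Sum>k\<in>\<sigma>. e k *\<^sub>R \<rho> k)"
    by (simp add: sum.reindex[OF inj] c_def inv_into_f_f[OF inj])
  then have "c (\<rho> k0) = 0"
    using e k0 smooth_fan_cone_independent(2)[OF F \<sigma>] unfolding independent_explicit by simp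
  then show ?thesis by (simp add: c_def inv_into_f_f[OF inj k0])
qed

lemma smooth_fan_cone_complex_coeffs_zero:
  fixes \<rho> :: "'k \<Rightarrow> real^'n"
  assumes F: "smooth_complete_fan \<rho> R C" and \<sigma>: "\<sigma> \<in> C"
    and z: "\<And>t. (\<Sum>k\<in>\<sigma>. complex_of_real (\<rho> k $ t) * z k) = 0" and k0: "k0 \<in> \<sigma>"
  shows "z k0 = 0"
proof -
  have "(\<Sum>k\<in>\<sigma>. Re (z k) *\<^sub>R \<rho> k) = 0" "(\<Sum>k\<in>\<sigma>. Im (z k) *\<^sub>R \<rho> k) = 0"
    using arg_cong[OF z, of Re] arg_cong[OF z, of Im]
    by (auto simp: vec_eq_iff sum_component Re_sum Im_sum mult.commute)
  then show ?thesis
    using smooth_fan_cone_coeffs_zero[OF F \<sigma> _ k0] by (metis complex_eq_iff zero_complex.sel)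
qed

lemma smooth_fan_cone_coeffs_Ints:
  fixes \<rho> :: "'k \<Rightarrow> real^'n"
  assumes F: "smooth_complete_fan \<rho> R C" and \<sigma>: "\<sigma> \<in> C"
    and x: "int_vec (\<Sum>k\<in>\<sigma>. c k *\<^sub>R \<rho> k)" and k0: "k0 \<in> \<sigma>"
  shows "c k0 \<in> \<int>"
proof -
  obtain d where "\<forall>k\<in>\<sigma>. d k \<in> \<int>" and "(\<Sum>k\<in>\<sigma>. c k *\<^sub>R \<rho> k) = (\<Sum>k\<in>\<sigma>. d k *\<^sub>R \<rho> k)"
    using F \<sigma> x unfolding smooth_complete_fan_def by blast
  moreover from this(2) have "(\<Sum>k\<in>\<sigma>. (c k - d k) *\<^sub>R \<rho> k) = 0"
    by (simp add: scaleR_diff_left sum_subtractf)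
  ultimately show ?thesis
    using smooth_fan_cone_coeffs_zero[OF F \<sigma> _ k0] k0 by fastforce
qed

lemma ind_zero_locus_linearD:
  assumes "\<alpha> \<in> ind_zero_locus r nI \<rho> \<tau> b0 b" and "int_vec m"
  shows "(\<Sum>k\<in>Jset r nI. complex_of_real (pair_nu \<rho> m kk k) * \<alpha> k) = pair_beta r m kk b0 b"
  using assms unfolding ind_zero_locus_def by auto

lemma pair_beta_axis: "pair_beta r (axis t 1) (\<lambda>_. 0) b0 b = b0 $ t"
proof -
  have "complex_of_real (axis t 1 $ t') * b0 $ t' = (if t' = t then b0 $ t else 0)" for t'
    by (simp add: axis_def)
  then show ?thesis by (simp add: pair_beta_def)
qed

lemma pair_beta_block:
  assumes "i \<in> {1..r}"
  shows "pair_beta r 0 (\<lambda>i'. if i' = i then 1 else 0) b0 b = b i"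
proof -
  have "complex_of_int (if i' = i then 1 else 0) * b i' = (if i' = i then b i else 0)" for i'
    by simp
  then show ?thesis using assms by (simp add: pair_beta_def)
qed

lemma ind_zero_locus_ray_relation:
  fixes \<rho> :: "nat \<times> nat \<Rightarrow> real^'n"
  assumes "\<alpha> \<in> ind_zero_locus r nI \<rho> \<tau> b0 b"
  shows "(\<Sum>k\<in>J1 r nI. complex_of_real (\<rho> k $ t) * \<alpha> k) = b0 $ t"
proof -
  have "(\<Sum>k\<in>J1 r nI. complex_of_real (\<rho> k $ t) * \<alpha> k)
      = (\<Sum>k\<in>Jset r nI. complex_of_real (pair_nu \<rho> (axis t 1) (\<lambda>_. 0) k) * \<alpha> k)"
    by (rule sum.mono_neutral_cong_left[OF finite_Jset J1_subset_Jset])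
      (auto simp: J1_iff pair_nu_def inner_axis')
  then show ?thesis
    using ind_zero_locus_linearD[OF assms int_vec_axis] by (simp add: pair_beta_axis)
qed

lemma ind_zero_locus_block_sum:
  fixes \<rho> :: "nat \<times> nat \<Rightarrow> real^'n"
  assumes "\<alpha> \<in> ind_zero_locus r nI \<rho> \<tau> b0 b" and i: "i \<in> {1..r}"
  shows "(\<Sum>j\<in>{0..nI i}. \<alpha> (i,j)) = b i"
proof -
  let ?kk = "\<lambda>i'. if i' = i then 1 else 0 :: int"
  have "(\<Sum>j\<in>{0..nI i}. \<alpha> (i,j))
      = (\<Sum>i'\<in>{1..r}. if i' = i then (\<Sum>j\<in>{0..nI i'}. \<alpha> (i',j)) else 0)"
    using i by simp
  also have "\<dots> = (\<Sum>k\<in>Jset r nI. complex_of_real (pair_nu \<rho> 0 ?kk k) * \<alpha> k)"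
    unfolding sum_Jset by (rule sum.cong) (auto simp: pair_nu_def intro!: sum.cong sum.neutral)
  also have "\<dots> = b i"
    using ind_zero_locus_linearD[OF assms(1), of 0 ?kk] pair_beta_block[OF i]
    by (simp add: int_vec_def)
  finally show ?thesis .
qed

lemma ample_div_imp_nef_div: "ample_div \<rho> R C a \<Longrightarrow> nef_div \<rho> R C a"
  unfolding ample_div_def nef_div_def by (metis DiffI less_eq_real_def order_refl)

lemma nef_div_relation_nonneg:
  fixes \<rho> :: "'k \<Rightarrow> real^'n"
  assumes nef: "nef_div \<rho> R C a" and \<sigma>: "\<sigma> \<in> C"
    and rel: "(\<Sum>k\<in>R. real_of_int (l k) *\<^sub>R \<rho> k) = 0"
    and pos: "\<forall>k\<in>R - \<sigma>. 0 \<le> l k"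
  shows "0 \<le> (\<Sum>k\<in>R. real_of_int (l k) * a k)"
proof -
  obtain m :: "real^'n" where eq: "\<forall>k\<in>\<sigma>. m \<bullet> \<rho> k = - a k" and ge: "\<forall>k\<in>R. m \<bullet> \<rho> k \<ge> - a k"
    using nef \<sigma> unfolding nef_div_def by blast
  have "(\<Sum>k\<in>R. real_of_int (l k) * (m \<bullet> \<rho> k)) = m \<bullet> (\<Sum>k\<in>R. real_of_int (l k) *\<^sub>R \<rho> k)"
    by (simp add: inner_sum_right)
  then have "(\<Sum>k\<in>R. real_of_int (l k) * a k) = (\<Sum>k\<in>R. real_of_int (l k) * (a k + m \<bullet> \<rho> k))"
    using rel by (simp add: distrib_left sum.distrib)
  also have "\<dots> \<ge> 0"
  proof (rule sum_nonneg)
    fix k assume "k \<in> R"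
    then show "0 \<le> real_of_int (l k) * (a k + m \<bullet> \<rho> k)"
      using eq ge pos by (cases "k \<in> \<sigma>") auto
  qed
  finally show ?thesis .
qed

definition Lext_lift :: "nat \<Rightarrow> (nat \<Rightarrow> nat) \<Rightarrow> (nat \<times> nat \<Rightarrow> int) \<Rightarrow> nat \<times> nat \<Rightarrow> int" where
  "Lext_lift r nI l k =
     (if k \<in> J1 r nI then l k
      else if k \<in> Jset r nI then - (\<Sum>j\<in>{1..nI (fst k)}. l (fst k, j)) else 0)"

lemma Lext_lift_zero_index:
  "i \<in> {1..r} \<Longrightarrow> Lext_lift r nI l (i,0) = - (\<Sum>j\<in>{1..nI i}. l (i,j))"
  by (simp add: Lext_lift_def J1_def Jset_def)

lemma sum_Lext_lift_block:
  fixes f :: "nat \<Rightarrow> 'a::comm_ring_1"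
  assumes "i \<in> {1..r}"
  shows "(\<Sum>j\<in>{0..nI i}. f j * of_int (Lext_lift r nI l (i,j)))
       = (\<Sum>j\<in>{1..nI i}. (f j - f 0) * of_int (l (i,j)))"
proof -
  have "(\<Sum>j\<in>{1..nI i}. f j * of_int (Lext_lift r nI l (i,j))) = (\<Sum>j\<in>{1..nI i}. f j * of_int (l (i,j)))"
    using assms by (intro sum.cong) (auto simp: Lext_lift_def J1_def)
  then show ?thesis
    using assms by (simp add: sum.atLeast_Suc_atMost Lext_lift_zero_index sum_distrib_left
        left_diff_distrib sum_subtractf)
qed

lemma Lext_lift_in_Lext:
  assumes "(\<Sum>k\<in>J1 r nI. real_of_int (l k) *\<^sub>R \<rho> k) = 0"
  shows "Lext_lift r nI l \<in> Lext r nI \<rho>"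
  unfolding Lext_def
proof (intro CollectI conjI allI impI ballI)
  show "Lext_lift r nI l k = 0" if "k \<notin> Jset r nI" for k
    using that J1_subset_Jset by (auto simp: Lext_lift_def)
  show "(\<Sum>k\<in>J1 r nI. real_of_int (Lext_lift r nI l k) *\<^sub>R \<rho> k) = 0"
    using assms by (simp add: Lext_lift_def)
  show "(\<Sum>j\<in>{0..nI i}. Lext_lift r nI l (i,j)) = 0" if "i \<in> {1..r}" for i
    using sum_Lext_lift_block[OF that, of "\<lambda>_. 1 :: int"] by simp
qed

lemma Lext_lift_pairing:
  "(\<Sum>k\<in>Jset r nI. w k * real_of_int (Lext_lift r nI l k))
     = (\<Sum>k\<in>J1 r nI. real_of_int (l k) * (w k - w (fst k, 0)))"
  unfolding sum_Jset sum_J1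
  by (rule sum.cong[OF refl], subst sum_Lext_lift_block) (auto simp: mult.commute)

lemma Lext_lift_in_dual_Lext:
  fixes \<rho> :: "nat \<times> nat \<Rightarrow> real^'n"
  assumes \<sigma>: "\<sigma> \<in> C" and rel: "(\<Sum>k\<in>J1 r nI. real_of_int (l k) *\<^sub>R \<rho> k) = 0"
    and pos: "\<forall>k\<in>J1 r nI - \<sigma>. 0 \<le> l k"
    and \<tau>: "\<tau> \<subseteq> closure (kahler_cone r nI \<rho> C)"
  shows "Lext_lift r nI l \<in> dual_Lext r nI \<rho> \<tau>"
proof -
  let ?H = "{w. 0 \<le> (\<Sum>k\<in>Jset r nI. w k * real_of_int (Lext_lift r nI l k))}"
  have "kahler_cone r nI \<rho> C \<subseteq> ?H"
  proof
    fix w assume "w \<in> kahler_cone r nI \<rho> C"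
    then have "nef_div \<rho> (J1 r nI) C (\<lambda>k. w k - w (fst k, 0))"
      by (simp add: kahler_cone_def ample_div_imp_nef_div)
    from nef_div_relation_nonneg[OF this \<sigma> rel pos] show "w \<in> ?H"
      by (simp add: Lext_lift_pairing)
  qed
  moreover have "closed ?H"
    by (intro closed_Collect_le continuous_on_const continuous_on_sum continuous_on_mult
        continuous_on_product_coordinates)
  ultimately have "closure (kahler_cone r nI \<rho> C) \<subseteq> ?H"
    by (rule closure_minimal)
  then show ?thesis
    using \<tau> Lext_lift_in_Lext[OF rel] by (auto simp: dual_Lext_def)
qed

lemma Lext_lift_zero_index_nonpos:
  fixes \<rho> :: "nat \<times> nat \<Rightarrow> real^'n"
  assumes nefp: "nef_partition r nI \<rho> C" and \<sigma>: "\<sigma> \<in> C"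
    and rel: "(\<Sum>k\<in>J1 r nI. real_of_int (l k) *\<^sub>R \<rho> k) = 0"
    and pos: "\<forall>k\<in>J1 r nI - \<sigma>. 0 \<le> l k" and i: "i \<in> {1..r}"
  shows "Lext_lift r nI l (i,0) \<le> 0"
proof -
  have "nef_div \<rho> (J1 r nI) C (\<lambda>k. if fst k = i then 1 else 0)"
    using nefp i unfolding nef_partition_def by blast
  from nef_div_relation_nonneg[OF this \<sigma> rel pos]
  have "0 \<le> (\<Sum>k\<in>J1 r nI. real_of_int (l k) * (if fst k = i then 1 else 0))" .
  also have "\<dots> = (\<Sum>i'\<in>{1..r}. if i' = i then real_of_int (\<Sum>j\<in>{1..nI i'}. l (i',j)) else 0)"
    unfolding sum_J1 by (rule sum.cong) auto
  finally show ?thesis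
    using i by (simp add: Lext_lift_zero_index flip: of_int_sum)
qed

lemma I_ell_nonzero:
  assumes "\<forall>k\<in>Jset r nI. l k \<le> 0 \<or> (l k = 1 \<and> \<alpha> k \<noteq> 0)"
  shows "I_ell r nI l \<alpha> \<noteq> 0"
  unfolding I_ell_def
proof (subst prod_zero_iff[OF finite_Jset], safe)
  fix k assume "k \<in> Jset r nI" and "(\<Prod>q<nat (l k). \<alpha> k - of_nat q) = 0"
  then show False using assms by (auto simp: lessThan_Suc)
qed

lemma ind_zero_locus_relation_absurd:
  fixes \<rho> :: "nat \<times> nat \<Rightarrow> real^'n"
  assumes nefp: "nef_partition r nI \<rho> C" and \<sigma>: "\<sigma> \<in> C"
    and \<tau>: "\<tau> \<subseteq> closure (kahler_cone r nI \<rho> C)"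
    and \<alpha>: "\<alpha> \<in> ind_zero_locus r nI \<rho> \<tau> b0 b"
    and rel: "(\<Sum>k\<in>J1 r nI. real_of_int (l k) *\<^sub>R \<rho> k) = 0"
    and pos: "\<forall>k\<in>J1 r nI - \<sigma>. 0 \<le> l k"
    and bound: "\<forall>k\<in>J1 r nI. l k \<le> 0 \<or> (l k = 1 \<and> \<alpha> k \<noteq> 0)"
    and k1: "k1 \<in> J1 r nI" "l k1 = 1"
  shows False
proof -
  have "Lext_lift r nI l k1 = 1" using k1 by (simp add: Lext_lift_def)
  then have "Lext_lift r nI l \<noteq> (\<lambda>_. 0)" by auto
  then have "I_ell r nI (Lext_lift r nI l) \<alpha> = 0"
    using \<alpha> Lext_lift_in_dual_Lext[OF \<sigma> rel pos \<tau>] unfolding ind_zero_locus_def by blast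
  moreover have "I_ell r nI (Lext_lift r nI l) \<alpha> \<noteq> 0"
  proof (rule I_ell_nonzero, intro ballI)
    fix k assume k: "k \<in> Jset r nI"
    show "Lext_lift r nI l k \<le> 0 \<or> Lext_lift r nI l k = 1 \<and> \<alpha> k \<noteq> 0"
    proof (cases "k \<in> J1 r nI")
      case True
      then show ?thesis using bound by (simp add: Lext_lift_def)
    next
      case False
      with k obtain i where "k = (i,0)" "i \<in> {1..r}" by (auto simp: J1_iff Jset_def)
      then show ?thesis using Lext_lift_zero_index_nonpos[OF nefp \<sigma> rel pos] by simp
    qed
  qed
  ultimately show False by simp
qed

lemma smooth_fan_int_vec_in_cone:
  fixes \<rho> :: "'k \<Rightarrow> real^'n"
  assumes fan: "smooth_complete_fan \<rho> R C" and x: "int_vec x"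
  obtains \<sigma> c where "\<sigma> \<in> C" "\<forall>k\<in>\<sigma>. 0 \<le> c k" "x = (\<Sum>k\<in>\<sigma>. real_of_int (c k) *\<^sub>R \<rho> k)"
proof -
  obtain \<sigma> c where \<sigma>: "\<sigma> \<in> C" and c0: "\<forall>k\<in>\<sigma>. 0 \<le> c k"
    and xc: "x = (\<Sum>k\<in>\<sigma>. c k *\<^sub>R \<rho> k)"
    using smooth_complete_fanD(3)[OF fan, of x] unfolding gen_cone_def by blast
  have "c k \<in> \<int>" if "k \<in> \<sigma>" for k
    using smooth_fan_cone_coeffs_Ints[OF fan \<sigma> _ that] x xc by simp
  then have cZ: "\<forall>k\<in>\<sigma>. real_of_int \<lfloor>c k\<rfloor> = c k"
    by (metis Ints_cases floor_of_int)
  show thesis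
  proof (rule that[OF \<sigma>, of "\<lambda>k. \<lfloor>c k\<rfloor>"])
    show "\<forall>k\<in>\<sigma>. 0 \<le> \<lfloor>c k\<rfloor>" using c0 by simp
    show "x = (\<Sum>k\<in>\<sigma>. real_of_int \<lfloor>c k\<rfloor> *\<^sub>R \<rho> k)" unfolding xc by (rule sum.cong[OF refl]) (simp add: cZ)
  qed
qed

lemma ind_zero_locus_vanishes_on_rays:
  fixes \<rho> :: "nat \<times> nat \<Rightarrow> real^'n"
  assumes fan: "smooth_complete_fan \<rho> (J1 r nI) C"
    and nefp: "nef_partition r nI \<rho> C"
    and \<tau>: "\<tau> \<subseteq> closure (kahler_cone r nI \<rho> C)"
    and \<alpha>: "\<alpha> \<in> ind_zero_locus r nI \<rho> \<tau> 0 b"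
    and k0: "k0 \<in> J1 r nI"
  shows "\<alpha> k0 = 0"
proof (rule ccontr)
  assume "\<alpha> k0 \<noteq> 0"
  define F where "F = {k \<in> J1 r nI. \<alpha> k \<noteq> 0}"
  have k0F: "k0 \<in> F" using k0 \<open>\<alpha> k0 \<noteq> 0\<close> by (simp add: F_def)
  have FR: "F \<subseteq> J1 r nI" by (auto simp: F_def)
  have "int_vec (\<Sum>k\<in>F. \<rho> k)"
    using smooth_complete_fanD(2)[OF fan] FR unfolding int_vec_def
    by (auto simp: sum_component intro!: Ints_sum)
  then obtain \<sigma> c where \<sigma>: "\<sigma> \<in> C" and c0: "\<forall>k\<in>\<sigma>. 0 \<le> c k"
    and x: "(\<Sum>k\<in>F. \<rho> k) = (\<Sum>k\<in>\<sigma>. real_of_int (c k) *\<^sub>R \<rho> k)"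
    by (rule smooth_fan_int_vec_in_cone[OF fan])
  have \<sigma>R: "\<sigma> \<subseteq> J1 r nI" using smooth_complete_fanD(1)[OF fan \<sigma>] .
  show False
  proof (cases "F \<subseteq> \<sigma>")
    case True
    have "(\<Sum>k\<in>\<sigma>. complex_of_real (\<rho> k $ t) * \<alpha> k) = 0" for t
      using ind_zero_locus_ray_relation[OF \<alpha>, of t] True
      by (subst (asm) sum.mono_neutral_right[OF finite_J1 \<sigma>R]) (auto simp: F_def)
    from smooth_fan_cone_complex_coeffs_zero[OF fan \<sigma> this] k0F True
    show False using \<open>\<alpha> k0 \<noteq> 0\<close> by blast
  next
    case False
    then obtain k1 where k1: "k1 \<in> F" "k1 \<notin> \<sigma>" by blast
    define l :: "nat \<times> nat \<Rightarrow> int" where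
      "l k = of_bool (k \<in> F) - (if k \<in> \<sigma> then c k else 0)" for k
    have "(\<Sum>k\<in>J1 r nI. real_of_int (l k) *\<^sub>R \<rho> k)
        = (\<Sum>k\<in>J1 r nI. if k \<in> F then \<rho> k else 0)
          - (\<Sum>k\<in>J1 r nI. if k \<in> \<sigma> then real_of_int (c k) *\<^sub>R \<rho> k else 0)"
      unfolding sum_subtractf[symmetric] by (rule sum.cong) (auto simp: l_def scaleR_diff_left)
    also have "\<dots> = 0"
      using FR \<sigma>R x by (simp add: sum.inter_restrict[OF finite_J1, symmetric] Int_absorb1)
    finally have rel: "(\<Sum>k\<in>J1 r nI. real_of_int (l k) *\<^sub>R \<rho> k) = 0" .
    have "\<forall>k\<in>J1 r nI. l k \<le> 0 \<or> (l k = 1 \<and> \<alpha> k \<noteq> 0)"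
    proof
      fix k assume "k \<in> J1 r nI"
      moreover have "l k \<le> of_bool (k \<in> F)" using c0 by (simp add: l_def)
      ultimately show "l k \<le> 0 \<or> (l k = 1 \<and> \<alpha> k \<noteq> 0)"
        by (cases "k \<in> F") (auto simp: F_def)
    qed
    moreover have "0 \<le> l k" if "k \<notin> \<sigma>" for k using that by (simp add: l_def)
    moreover have "k1 \<in> J1 r nI" "l k1 = 1" using k1 FR by (auto simp: l_def)
    ultimately show False
      by (intro ind_zero_locus_relation_absurd[OF nefp \<sigma> \<tau> \<alpha> rel]) auto
  qed
qed

theorem mainTheorem9:
  fixes r :: nat and nI :: "nat \<Rightarrow> nat" and \<rho> :: "nat \<times> nat \<Rightarrow> real^'n"
    and C :: "(nat \<times> nat) set set" and \<tau> :: "(nat \<times> nat \<Rightarrow> real) set"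
  assumes "smooth_complete_fan \<rho> (J1 r nI) C"
    and "projective_fan \<rho> (J1 r nI) C"
    and "nef_partition r nI \<rho> C"
    and "fun_convex_cone \<tau>"
    and "\<tau> \<subseteq> closure (kahler_cone r nI \<rho> C)"
  shows "\<forall>\<alpha>\<in>ind_zero_locus r nI \<rho> \<tau> 0 (\<lambda>i. - 1/2).
           \<forall>k\<in>Jset r nI. \<alpha> k = (if snd k = 0 then - 1/2 else 0)"
proof (intro ballI)
  fix \<alpha> k assume \<alpha>: "\<alpha> \<in> ind_zero_locus r nI \<rho> \<tau> 0 (\<lambda>i. - 1/2)" and k: "k \<in> Jset r nI"
  note rays_zero = ind_zero_locus_vanishes_on_rays[OF assms(1,3,5) \<alpha>]
  show "\<alpha> k = (if snd k = 0 then - 1/2 else 0)"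
  proof (cases "snd k = 0")
    case False
    then show ?thesis using rays_zero k by (simp add: J1_iff)
  next
    case True
    with k obtain i where ki: "k = (i,0)" and i: "i \<in> {1..r}" by (auto simp: Jset_def)
    have "\<alpha> (i,0) + (\<Sum>j\<in>{1..nI i}. \<alpha> (i,j)) = - 1/2"
      using ind_zero_locus_block_sum[OF \<alpha> i] by (simp add: sum.atLeast_Suc_atMost)
    moreover have "(\<Sum>j\<in>{1..nI i}. \<alpha> (i,j)) = 0"
      using rays_zero i by (intro sum.neutral) (auto simp: J1_def)
    ultimately show ?thesis using ki by simp
  qed
qed

end
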